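(* Let $V=\mathrm{span}_{\mathbb{F}_q}\{x_1,\dots,x_n\}\subset S$, let $m\ge1$, let $\lambda=(n^m)$ be the partition with $m$ parts all equal to $n$, and let $\mu\subseteq\lambda$ be a partition with conjugate $\mu'$. Then, in $\widehat S$, $$T_{\lambda/\mu}(V)=(-1)^{nm+|\mu|}\,\frac{\det\big(x_i^{q^{\,n+j-\mu'_j-1}}\big)_{1\le i,j\le n}}{\det\big(x_i^{q^{\,n+j-m-1}}\big)_{1\le i,j\le n}}.$$
   Context: Let $q$ be a power of a prime $p$, $S=\mathbb{F}_q[x_1,\dots,x_n]$, $\widehat S=\bigcup_{r\ge0}\mathbb{F}_q[x_1^{q^{-r}},\dots,x_n^{q^{-r}}]$ (so $x_i^{q^{e}}$ makes sense for all $e\in\mathbb{Z}$), $\varphi(u)=u^q$ the Frobenius automorphism of $\widehat S$. For a subspace $W\subset S$ of dimension $k$ with basis $w_1,\dots,w_k$ and strictly decreasing nonnegative integers $\alpha_1>\dots>\alpha_k$, $A_\alpha(W)=\det(w_i^{q^{\alpha_j}})_{i,j}$; for a partition $\lambda$ with at most $k$ nonzero parts, $S_\lambda(W)=A_{\lambda+\delta_k}(W)/A_{\delta_k}(W)$, $\delta_k=(k-1,\dots,0)$. $E_r(W)=S_{(1^r)}(W)$ for $0\le r\le k$, $E_r(W)=0$ otherwise. For partitions $\lambda,\mu$ with $N=\max\{\ell(\lambda),\ell(\mu)\}$ ($\ell$ = number of nonzero parts), $T_{\lambda/\mu}(W)=\det\big((-1)^{\lambda_i-\mu_j-i+j}\varphi^{\lambda_i-i}E_{\lambda_i-\mu_j-i+j}(W)\big)_{1\le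 i,j\le N}$. $|\mu|$ is the sum of the parts of $\mu$, and $\mu\subseteq\lambda$ means $\mu_i\le\lambda_i$ for all $i$. *)

theory Defs
  imports "HOL-Library.Poly_Mapping" "HOL-Library.Cardinality" "Jordan_Normal_Form.Determinant"
begin

text \<open>The ring containing hat S: finitely supported F_q-linear combinations of monomials
  x^a with a :: nat =>0 rat (rational exponents). The variable x_(i+1) is X i (0-based).
  The base field F_q is a finite field type 'a, q = CARD('a).\<close>

type_synonym 'a hatS = "(nat \<Rightarrow>\<^sub>0 rat) \<Rightarrow>\<^sub>0 'a"

definition X :: "nat \<Rightarrow> 'a::{field,finite} hatS" where
  "X i = Poly_Mapping.single (Poly_Mapping.single i (1::rat)) 1"

definition frob_int :: "int \<Rightarrow> 'a::{field,finite} hatS \<Rightarrow> 'a hatS" where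
  "frob_int e u = (if 0 \<le> e then u ^ (CARD('a) ^ nat e)
                   else (THE v. v ^ (CARD('a) ^ nat (- e)) = u))"

text \<open>A_alpha(W) for W with basis w_1..w_k (stored 0-based as w 0 .. w (k-1)),
  alpha stored 0-based: alpha j = alpha_(j+1).\<close>
definition A_det :: "nat \<Rightarrow> (nat \<Rightarrow> 'a::{field,finite} hatS) \<Rightarrow> (nat \<Rightarrow> nat) \<Rightarrow> 'a hatS" where
  "A_det k w \<alpha> = det (mat k k (\<lambda>(i, j). w i ^ (CARD('a) ^ \<alpha> j)))"

definition delta :: "nat \<Rightarrow> nat \<Rightarrow> nat" where
  "delta k j = k - 1 - j"

text \<open>S_lambda(W) = A_(lambda+delta)(W) / A_delta(W) (exact quotient); lambda 0-based.\<close>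
definition schurW :: "nat \<Rightarrow> (nat \<Rightarrow> 'a::{field,finite} hatS) \<Rightarrow> (nat \<Rightarrow> nat) \<Rightarrow> 'a hatS" where
  "schurW k w lam = (THE u. u * A_det k w (delta k) = A_det k w (\<lambda>j. lam j + delta k j))"

definition E_W :: "nat \<Rightarrow> (nat \<Rightarrow> 'a::{field,finite} hatS) \<Rightarrow> int \<Rightarrow> 'a hatS" where
  "E_W k w r = (if 0 \<le> r \<and> r \<le> int k then schurW k w (\<lambda>i. if i < nat r then 1 else 0) else 0)"

text \<open>Partitions are stored 0-based: lam i = lambda_(i+1).\<close>
definition is_partition :: "(nat \<Rightarrow> nat) \<Rightarrow> bool" where
  "is_partition lam \<longleftrightarrow> (\<forall>i. lam (Suc i) \<le> lam i) \<and> finite {i. lam i \<noteq> 0}"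

definition plen :: "(nat \<Rightarrow> nat) \<Rightarrow> nat" where
  "plen lam = card {i. lam i \<noteq> 0}"

definition psize :: "(nat \<Rightarrow> nat) \<Rightarrow> nat" where
  "psize lam = (\<Sum>i\<in>{i. lam i \<noteq> 0}. lam i)"

text \<open>Conjugate partition, 1-based argument: conj_part lam j = lambda'_j = #{i. lambda_i >= j}.\<close>
definition conj_part :: "(nat \<Rightarrow> nat) \<Rightarrow> nat \<Rightarrow> nat" where
  "conj_part lam j = card {i. j \<le> lam i}"

definition subpart :: "(nat \<Rightarrow> nat) \<Rightarrow> (nat \<Rightarrow> nat) \<Rightarrow> bool" where
  "subpart mu lam \<longleftrightarrow> (\<forall>i. mu i \<le> lam i)"

text \<open>T_(lambda/mu)(W); matrix indices 0-based, paper index = index + 1.\<close>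
definition T_W :: "nat \<Rightarrow> (nat \<Rightarrow> 'a::{field,finite} hatS) \<Rightarrow> (nat \<Rightarrow> nat) \<Rightarrow> (nat \<Rightarrow> nat) \<Rightarrow> 'a hatS" where
  "T_W k w lam mu = (let N = max (plen lam) (plen mu) in
     det (mat N N (\<lambda>(i, j).
       let r = int (lam i) - int (mu j) - int (i + 1) + int (j + 1) in
       (-1) ^ nat \<bar>r\<bar> * frob_int (int (lam i) - int (i + 1)) (E_W k w r))))"

end

theory Submission
  imports Defs "HOL-Algebra.Sylow" "HOL-Algebra.Multiplicative_Group"
begin

lemma eq_prime_power_if_prime_divisors_eq:
  fixes n p :: nat
  assumes "n > 0" and "\<And>r. prime r \<Longrightarrow> r dvd n \<Longrightarrow> r = p"
  shows "\<exists>k. n = p ^ k"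
  using assms
proof (induction n rule: less_induct)
  case (less n)
  show ?case
  proof (cases "n = 1")
    case True
    then show ?thesis by (intro exI[of _ 0]) simp
  next
    case False
    then obtain r where "prime r" "r dvd n"
      using prime_factor_nat by blast
    with less.prems obtain n' where n: "n = p * n'" and "prime p"
      by (metis dvd_def)
    then have "n' < n" "n' > 0"
      using less.prems(1) prime_gt_1_nat[of p] by auto
    moreover have "r = p" if "prime r" "r dvd n'" for r
      using that less.prems(2) n by simp
    ultimately obtain k where "n' = p ^ k"
      using less.IH by blast
    with n show ?thesis by (intro exI[of _ "Suc k"]) simp
  qed
qed

lemma card_finite_field_eq_CHAR_power: "\<exists>k. CARD('a::{field,finite}) = CHAR('a) ^ k"
proof (rule eq_prime_power_if_prime_divisors_eq)
  define G :: "'a monoid" where "G = \<lparr>carrier = UNIV, monoid.mult = (+), one = 0\<rparr>"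
  interpret G: group G
    by (rule groupI) (auto simp: G_def add.assoc intro: exI[of _ "- _"])
  fix r assume r: "prime r" "r dvd CARD('a)"
  then obtain c where c: "order G = r ^ 1 * c"
    by (auto simp: order_def G_def)
  obtain H where H: "subgroup H G" "card H = r"
    using sylow_thm[OF r(1) G.is_group c] by (auto simp: G_def)
  then obtain h where h: "h \<in> H" "h \<noteq> 0"
  proof -
    have "\<not> H \<subseteq> {0}"
      using card_mono[of "{0}" H] prime_gt_1_nat[OF r(1)] H(2) by auto
    with that show ?thesis by blast
  qed
  interpret H: group "G\<lparr>carrier := H\<rparr>"
    by (rule subgroup.subgroup_is_group[OF H(1) G.group_axioms])
  \<comment> \<open>Lagrange in the additive subgroup H of order r\<close>
  have "h [^]\<^bsub>G\<lparr>carrier := H\<rparr>\<^esub> order (G\<lparr>carrier := H\<rparr>) = \<one>\<^bsub>G\<lparr>carrier := H\<rparr>\<^esub>"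
    by (rule H.pow_order_eq_1) (use h H prime_gt_1_nat[OF r(1)] in \<open>auto simp: card_ge_0_finite\<close>)
  moreover have "y [^]\<^bsub>G\<lparr>carrier := H\<rparr>\<^esub> k = of_nat k * y" for y and k :: nat
    by (induction k) (simp_all add: G_def distrib_right)
  ultimately have "of_nat r * h = 0"
    using H(2) by (simp add: order_def G_def)
  then have "CHAR('a) dvd r"
    using h(2) by (simp add: of_nat_eq_0_iff_char_dvd)
  then show "r = CHAR('a)"
    using r(1) prime_CHAR_semidom[OF finite_imp_CHAR_pos[OF finite]] primes_dvd_imp_eq by blast
qed simp

lemma finite_field_power_card: "(x :: 'a::{field,finite}) ^ CARD('a) = x"
proof (cases "x = 0")
  case False
  define M :: "'a monoid" where "M = \<lparr>carrier = UNIV - {0}, monoid.mult = (*), one = 1\<rparr>"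
  interpret M: group M
    by (rule groupI) (auto simp: M_def mult.assoc intro!: bexI[of _ "inverse _"])
  have pow: "y [^]\<^bsub>M\<^esub> k = y ^ k" for y and k :: nat
    by (induction k) (simp_all add: M_def)
  have "x [^]\<^bsub>M\<^esub> order M = \<one>\<^bsub>M\<^esub>"
    by (rule M.pow_order_eq_1) (use False in \<open>auto simp: M_def\<close>)
  then have "x ^ (CARD('a) - 1) = 1"
    unfolding pow by (simp add: order_def M_def card_Diff_singleton)
  then show ?thesis
    by (metis power_minus_mult finite_UNIV_card_ge_0 finite mult_1)
qed simp

lemma finite_field_power_card_power: "(x :: 'a::{field,finite}) ^ (CARD('a) ^ e) = x"
  by (induction e) (simp_all add: finite_field_power_card power_mult)

definition scale_exps :: "rat \<Rightarrow> (nat \<Rightarrow>\<^sub>0 rat) \<Rightarrow> (nat \<Rightarrow>\<^sub>0 rat)" where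
  "scale_exps c a = Poly_Mapping.map ((*) c) a"

lemma lookup_scale_exps [simp]: "Poly_Mapping.lookup (scale_exps c a) i = c * Poly_Mapping.lookup a i"
  by (simp add: scale_exps_def map.rep_eq when_def)

lemma scale_exps_scale_exps [simp]: "scale_exps c (scale_exps d a) = scale_exps (c * d) a"
  by (rule poly_mapping_eqI) simp

lemma scale_exps_1 [simp]: "scale_exps 1 a = a"
  by (rule poly_mapping_eqI) simp

lemma scale_exps_0 [simp]: "scale_exps c 0 = 0"
  by (rule poly_mapping_eqI) simp

lemma scale_exps_0_left [simp]: "scale_exps 0 a = 0"
  by (rule poly_mapping_eqI) simp

lemma scale_exps_add: "scale_exps c (a + b) = scale_exps c a + scale_exps c b"
  by (rule poly_mapping_eqI) (simp add: lookup_add distrib_left)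

lemma scale_exps_single: "scale_exps c (Poly_Mapping.single i r) = Poly_Mapping.single i (c * r)"
  by (rule poly_mapping_eqI) (simp add: lookup_single when_def)

lemma inj_scale_exps: "c \<noteq> 0 \<Longrightarrow> inj (scale_exps c)"
  by (rule inj_on_inverseI[of _ "scale_exps (inverse c)"]) (simp add: poly_mapping_eqI)

text \<open>The substitution \<open>x\<^sub>i \<mapsto> x\<^sub>i\<^sup>t\<close> on \<open>hatS\<close>; only meaningful for \<open>t \<noteq> 0\<close>.\<close>

definition rescale :: "rat \<Rightarrow> ((nat \<Rightarrow>\<^sub>0 rat) \<Rightarrow>\<^sub>0 'b::zero) \<Rightarrow> (nat \<Rightarrow>\<^sub>0 rat) \<Rightarrow>\<^sub>0 'b" where
  "rescale t u = Poly_Mapping.map_key (scale_exps (inverse t)) u"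

lemma lookup_rescale:
  "t \<noteq> 0 \<Longrightarrow> Poly_Mapping.lookup (rescale t u) a = Poly_Mapping.lookup u (scale_exps (inverse t) a)"
  by (simp add: rescale_def map_key.rep_eq inj_scale_exps)

lemma rescale_single:
  "t \<noteq> 0 \<Longrightarrow> rescale t (Poly_Mapping.single a c) = Poly_Mapping.single (scale_exps t a) c"
  by (rule poly_mapping_eqI)
     (auto simp: lookup_rescale lookup_single when_def dest: arg_cong[of _ _ "scale_exps t"])

lemma rescale_rescale: "s \<noteq> 0 \<Longrightarrow> t \<noteq> 0 \<Longrightarrow> rescale s (rescale t u) = rescale (s * t) u"
  by (rule poly_mapping_eqI) (simp add: lookup_rescale mult.commute)

lemma rescale_1 [simp]: "rescale 1 u = u"
  by (rule poly_mapping_eqI) (simp add: lookup_rescale)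

lemma poly_mapping_sum_single:
  "u = (\<Sum>k\<in>Poly_Mapping.keys u. Poly_Mapping.single k (Poly_Mapping.lookup u k))"
  by (rule poly_mapping_eqI) (simp add: lookup_sum lookup_single when_def in_keys_iff)

lemma mult_eq_sum_single:
  fixes u v :: "('k::comm_monoid_add \<Rightarrow>\<^sub>0 'b::comm_semiring_1)"
  shows "u * v = (\<Sum>a\<in>Poly_Mapping.keys u. \<Sum>b\<in>Poly_Mapping.keys v.
     Poly_Mapping.single (a + b) (Poly_Mapping.lookup u a * Poly_Mapping.lookup v b))"
proof -
  have "u * v = (\<Sum>a\<in>Poly_Mapping.keys u. Poly_Mapping.single a (Poly_Mapping.lookup u a))
      * (\<Sum>b\<in>Poly_Mapping.keys v. Poly_Mapping.single b (Poly_Mapping.lookup v b))"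
    by (rule arg_cong2[where f = "(*)"]; rule poly_mapping_sum_single)
  then show ?thesis
    by (simp add: sum_product mult_single)
qed

lemma comm_ring_hom_rescale:
  assumes "t \<noteq> 0"
  shows "comm_ring_hom (rescale t :: ((nat \<Rightarrow>\<^sub>0 rat) \<Rightarrow>\<^sub>0 'b::comm_ring_1) \<Rightarrow> _)"
proof
  have add: "rescale t (u + v) = rescale t u + rescale t v" for u v :: "(nat \<Rightarrow>\<^sub>0 rat) \<Rightarrow>\<^sub>0 'b"
    using assms by (intro poly_mapping_eqI) (simp add: lookup_rescale lookup_add)
  have zero: "rescale t 0 = (0 :: (nat \<Rightarrow>\<^sub>0 rat) \<Rightarrow>\<^sub>0 'b)"
    using assms by (intro poly_mapping_eqI) (simp add: lookup_rescale)
  interpret comm_monoid_add_hom "rescale t :: ((nat \<Rightarrow>\<^sub>0 rat) \<Rightarrow>\<^sub>0 'b) \<Rightarrow> _"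
    by unfold_locales (fact zero, fact add)
  show "rescale t (u + v) = rescale t u + rescale t v" for u v :: "(nat \<Rightarrow>\<^sub>0 rat) \<Rightarrow>\<^sub>0 'b"
    by (fact add)
  show "rescale t 0 = (0 :: (nat \<Rightarrow>\<^sub>0 rat) \<Rightarrow>\<^sub>0 'b)"
    by (fact zero)
  show "rescale t 1 = (1 :: (nat \<Rightarrow>\<^sub>0 rat) \<Rightarrow>\<^sub>0 'b)"
    using rescale_single[OF assms, of 0 "1 :: 'b"] by (simp only: scale_exps_0 single_one)
  show "rescale t (u * v) = rescale t u * rescale t v" for u v :: "(nat \<Rightarrow>\<^sub>0 rat) \<Rightarrow>\<^sub>0 'b"
  proof -
    have "rescale t (u * v) = (\<Sum>a\<in>Poly_Mapping.keys u. \<Sum>b\<in>Poly_Mapping.keys v.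
        Poly_Mapping.single (scale_exps t a + scale_exps t b) (Poly_Mapping.lookup u a * Poly_Mapping.lookup v b))"
      by (subst mult_eq_sum_single) (simp add: hom_sum rescale_single[OF assms] scale_exps_add)
    also have "\<dots> = (\<Sum>a\<in>Poly_Mapping.keys u. rescale t (Poly_Mapping.single a (Poly_Mapping.lookup u a)))
        * (\<Sum>b\<in>Poly_Mapping.keys v. rescale t (Poly_Mapping.single b (Poly_Mapping.lookup v b)))"
      by (simp add: rescale_single[OF assms] sum_product mult_single)
    also have "\<dots> = rescale t u * rescale t v"
      by (simp only: hom_sum[symmetric] poly_mapping_sum_single[symmetric])
    finally show ?thesis .
  qed
qed

lemma CHAR_poly_mapping: "CHAR('k::comm_monoid_add \<Rightarrow>\<^sub>0 'b::comm_semiring_1) = CHAR('b)"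
proof (rule CHAR_eqI)
  show "of_nat CHAR('b) = (0 :: 'k \<Rightarrow>\<^sub>0 'b)"
    by (metis of_nat_CHAR single_of_nat single_zero)
next
  fix x assume "of_nat x = (0 :: 'k \<Rightarrow>\<^sub>0 'b)"
  then have "Poly_Mapping.lookup (of_nat x :: 'k \<Rightarrow>\<^sub>0 'b) 0 = 0"
    by simp
  then show "CHAR('b) dvd x"
    by (simp add: lookup_of_nat of_nat_eq_0_iff_char_dvd)
qed

lemma single_power:
  "(Poly_Mapping.single a c :: (nat \<Rightarrow>\<^sub>0 rat) \<Rightarrow>\<^sub>0 'b::comm_semiring_1) ^ k
     = Poly_Mapping.single (scale_exps (of_nat k) a) (c ^ k)"
proof (induction k)
  case (Suc k)
  have "a + scale_exps (of_nat k) a = scale_exps (of_nat (Suc k)) a"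
    by (rule poly_mapping_eqI) (simp add: lookup_add algebra_simps)
  then show ?case
    by (simp add: Suc mult_single)
qed simp

lemma power_card_power_eq_rescale:
  fixes u :: "'a::{field,finite} hatS"
  shows "u ^ (CARD('a) ^ e) = rescale (of_nat (CARD('a) ^ e)) u"
proof -
  let ?Q = "CARD('a) ^ e"
  obtain k where k: "CARD('a) = CHAR('a) ^ k"
    using card_finite_field_eq_CHAR_power by blast
  have dream: "(\<Sum>i\<in>A. f i) ^ ?Q = (\<Sum>i\<in>A. f i ^ ?Q)" for A and f :: "_ \<Rightarrow> 'a hatS"
  proof (rule freshmans_dream_sum')
    show "prime CHAR('a hatS)"
      unfolding CHAR_poly_mapping by (rule prime_CHAR_semidom[OF finite_imp_CHAR_pos[OF finite]])
    show "?Q = CHAR('a hatS) ^ (k * e)"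
      unfolding CHAR_poly_mapping k by (simp add: power_mult)
  qed
  have "u ^ ?Q = (\<Sum>a\<in>Poly_Mapping.keys u. Poly_Mapping.single a (Poly_Mapping.lookup u a)) ^ ?Q"
    by (subst poly_mapping_sum_single) (rule refl)
  also have "\<dots> = (\<Sum>a\<in>Poly_Mapping.keys u. rescale (of_nat ?Q) (Poly_Mapping.single a (Poly_Mapping.lookup u a)))"
    by (simp add: dream single_power rescale_single finite_field_power_card_power)
  also have "\<dots> = rescale (of_nat ?Q) u"
  proof -
    interpret comm_ring_hom "rescale (of_nat ?Q) :: 'a hatS \<Rightarrow> 'a hatS"
      by (rule comm_ring_hom_rescale) simp
    show ?thesis
      by (simp only: hom_sum[symmetric] poly_mapping_sum_single[symmetric])
  qed
  finally show ?thesis .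
qed

lemma frob_int_eq_rescale:
  fixes u :: "'a::{field,finite} hatS"
  shows "frob_int e u = rescale (of_nat CARD('a) powi e) u"
proof (cases "0 \<le> e")
  case True
  then show ?thesis
    by (simp add: frob_int_def power_card_power_eq_rescale power_int_def)
next
  case False
  let ?Q = "CARD('a) ^ nat (- e)"
  have "frob_int e u = (THE v. v ^ ?Q = u)"
    using False by (simp add: frob_int_def)
  also have "\<dots> = rescale (inverse (of_nat ?Q)) u"
  proof (rule the_equality)
    show "rescale (inverse (of_nat ?Q)) u ^ ?Q = u"
      by (simp add: power_card_power_eq_rescale rescale_rescale)
  next
    fix v assume "v ^ ?Q = u"
    then show "v = rescale (inverse (of_nat ?Q)) u"
      by (auto simp: power_card_power_eq_rescale rescale_rescale)
  qed
  also have "inverse (of_nat ?Q) = (of_nat CARD('a) powi e :: rat)"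
    using False by (simp add: power_int_def power_inverse)
  finally show ?thesis .
qed

interpretation frob_int: comm_ring_hom "frob_int e :: 'a::{field,finite} hatS \<Rightarrow> 'a hatS" for e
proof -
  have "frob_int e = (rescale (of_nat CARD('a) powi e) :: 'a hatS \<Rightarrow> _)"
    by (rule ext) (rule frob_int_eq_rescale)
  then show "comm_ring_hom (frob_int e :: 'a hatS \<Rightarrow> _)"
    by (simp add: comm_ring_hom_rescale)
qed

lemma frob_int_frob_int: "frob_int e (frob_int f (u :: 'a::{field,finite} hatS)) = frob_int (e + f) u"
  by (simp add: frob_int_eq_rescale rescale_rescale power_int_add)

lemma frob_int_of_nat: "frob_int (int k) (u :: 'a::{field,finite} hatS) = u ^ (CARD('a) ^ k)"
  by (simp add: frob_int_def)

lemma card_finite_field_ge_2: "CARD('a::{field,finite}) \<ge> 2"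
  using card_mono[of UNIV "{0 :: 'a, 1}"] by simp

lemma X_power: "(X i :: 'a::{field,finite} hatS) ^ k = Poly_Mapping.single (Poly_Mapping.single i (of_nat k)) 1"
  by (simp add: X_def single_power scale_exps_single)

lemma prod_single:
  "(\<Prod>i\<in>A. Poly_Mapping.single (f i) (c i) :: 'k::comm_monoid_add \<Rightarrow>\<^sub>0 'b::comm_semiring_1)
     = Poly_Mapping.single (\<Sum>i\<in>A. f i) (\<Prod>i\<in>A. c i)"
  by (induction A rule: infinite_finite_induct) (simp_all add: mult_single)

text \<open>The monomial \<open>\<Prod>\<^sub>i x\<^sub>i\<^bsup>q^\<alpha>\<^sub>i\<^esup>\<close> occurs only in the term of the identity permutation,
  because distinct \<open>\<alpha>\<^sub>j\<close> give distinct exponents \<open>q^\<alpha>\<^sub>j\<close>.\<close>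

lemma det_X_frobenius_ne_0:
  assumes inj: "inj_on \<alpha> {..<n}"
  shows "det (mat n n (\<lambda>(i, j). (X i :: 'a::{field,finite} hatS) ^ (CARD('a) ^ \<alpha> j))) \<noteq> 0"
proof -
  let ?q = "CARD('a)"
  let ?M = "mat n n (\<lambda>(i, j). (X i :: 'a hatS) ^ (?q ^ \<alpha> j))"
  define k where "k p = (\<Sum>i<n. Poly_Mapping.single i (of_nat (?q ^ \<alpha> (p i)) :: rat))" for p
  have det: "det ?M = (\<Sum>p\<in>{p. p permutes {0..<n}}. Poly_Mapping.single (k p) (of_int (sign p)))"
    unfolding det_def'[of ?M n, OF mat_carrier]
  proof (rule sum.cong[OF refl])
    fix p assume "p \<in> {p. p permutes {0..<n}}"
    then have "i < n \<Longrightarrow> p i < n" for i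
      by (auto dest: permutes_in_image)
    then have "(\<Prod>i = 0..<n. ?M $$ (i, p i)) = Poly_Mapping.single (k p) 1"
      by (simp add: X_power prod_single k_def atLeast0LessThan)
    then show "signof p * (\<Prod>i = 0..<n. ?M $$ (i, p i)) = Poly_Mapping.single (k p) (of_int (sign p))"
      by (simp add: mult_single flip: single_of_int)
  qed
  have k_eq_iff: "k p = k id \<longleftrightarrow> p = id" if p: "p permutes {0..<n}" for p
  proof
    assume eq: "k p = k id"
    have "p i = i" if i: "i < n" for i
    proof -
      have "Poly_Mapping.lookup (k p) i = Poly_Mapping.lookup (k id) i"
        by (simp only: eq)
      then have "(of_nat ?q :: rat) ^ \<alpha> (p i) = of_nat ?q ^ \<alpha> i"
        using i by (simp add: k_def lookup_sum lookup_single when_def)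
      then have "\<alpha> (p i) = \<alpha> i"
        using card_finite_field_ge_2[where 'a = 'a] by simp
      moreover have "p i < n"
        using p i by (auto dest: permutes_in_image)
      ultimately show "p i = i"
        using inj i by (auto dest: inj_onD)
    qed
    then show "p = id"
      using p by (auto simp: permutes_def fun_eq_iff)
  qed simp
  have "Poly_Mapping.lookup (det ?M) (k id) = (\<Sum>p\<in>{p. p permutes {0..<n}}. if p = id then 1 else 0)"
    unfolding det lookup_sum
    by (intro sum.cong refl) (auto simp: lookup_single when_def k_eq_iff sign_id)
  also have "\<dots> = 1"
    by (simp add: finite_permutations permutes_id)
  finally show ?thesis
    by auto
qed

lemma A_det_delta_X_ne_0: "A_det n (X :: nat \<Rightarrow> 'a::{field,finite} hatS) (delta n) \<noteq> 0"
  unfolding A_det_def by (rule det_X_frobenius_ne_0) (auto simp: delta_def inj_on_def)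

lemma schurW_eqI:
  assumes "A_det k w (delta k) \<noteq> 0" and "u * A_det k w (delta k) = A_det k w (\<lambda>j. lam j + delta k j)"
  shows "schurW k w lam = u"
  unfolding schurW_def
proof (rule the_equality)
  fix v assume "v * A_det k w (delta k) = A_det k w (\<lambda>j. lam j + delta k j)"
  then have "v * A_det k w (delta k) = u * A_det k w (delta k)"
    using assms(2) by simp
  with assms(1) show "v = u"
    by (simp add: mult_right_cancel)
qed (fact assms(2))

definition qpoly_eval :: "(nat \<Rightarrow> 'a::{field,finite} hatS) \<Rightarrow> nat \<Rightarrow> 'a hatS \<Rightarrow> 'a hatS" where
  "qpoly_eval c k t = (\<Sum>s\<le>k. c s * t ^ (CARD('a) ^ s))"

text \<open>The coefficients of the monic \<open>q\<close>-polynomial \<open>P\<^sub>k\<close> of \<open>q\<close>-degree \<open>k\<close> vanishing at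
  \<open>w 0, \<dots>, w (k - 1)\<close>, built by \<open>P\<^sub>k\<^sub>+\<^sub>1 = P\<^sub>k\<^sup>q - P\<^sub>k(w k)\<^bsup>q-1\<^esup> P\<^sub>k\<close>.\<close>

primrec annihilator_coeff :: "(nat \<Rightarrow> 'a::{field,finite} hatS) \<Rightarrow> nat \<Rightarrow> nat \<Rightarrow> 'a hatS" where
  "annihilator_coeff w 0 = (\<lambda>s. if s = 0 then 1 else 0)"
| "annihilator_coeff w (Suc k) = (\<lambda>s. (if s = 0 then 0 else annihilator_coeff w k (s - 1) ^ CARD('a))
      - qpoly_eval (annihilator_coeff w k) k (w k) ^ (CARD('a) - 1) * annihilator_coeff w k s)"

lemma annihilator_coeff_above: "k < s \<Longrightarrow> annihilator_coeff w k s = 0"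
  by (induction k arbitrary: s) simp_all

lemma annihilator_coeff_top [simp]: "annihilator_coeff w k k = 1"
  by (induction k) (simp_all add: annihilator_coeff_above)

lemma qpoly_eval_annihilator_Suc:
  fixes w :: "nat \<Rightarrow> 'a::{field,finite} hatS"
  defines "P k t \<equiv> qpoly_eval (annihilator_coeff w k) k t"
  shows "P (Suc k) t = P k t ^ CARD('a) - P k (w k) ^ (CARD('a) - 1) * P k t"
proof -
  let ?q = "CARD('a)" and ?c = "annihilator_coeff w k"
  define c where "c = P k (w k) ^ (?q - 1)"
  have "P (Suc k) t = (\<Sum>s\<le>Suc k. ((if s = 0 then 0 else ?c (s - 1) ^ ?q) - c * ?c s) * t ^ (?q ^ s))"
    by (simp only: P_def c_def qpoly_eval_def annihilator_coeff.simps(2))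
  also have "\<dots> = (\<Sum>s\<le>Suc k. (if s = 0 then 0 else ?c (s - 1) ^ ?q) * t ^ (?q ^ s))
      - c * (\<Sum>s\<le>Suc k. ?c s * t ^ (?q ^ s))"
    by (simp add: algebra_simps sum_subtractf sum_distrib_left)
  also have "(\<Sum>s\<le>Suc k. (if s = 0 then 0 else ?c (s - 1) ^ ?q) * t ^ (?q ^ s))
      = (\<Sum>s\<le>k. frob_int 1 (?c s * t ^ (?q ^ s)))"
    by (subst sum.atMost_Suc_shift)
       (simp add: frob_int_of_nat[of 1, simplified] power_mult_distrib power_mult[symmetric] mult.commute)
  also have "\<dots> = P k t ^ ?q"
    using frob_int_of_nat[of 1 "P k t"] by (simp add: P_def qpoly_eval_def frob_int.hom_sum)
  also have "(\<Sum>s\<le>Suc k. ?c s * t ^ (?q ^ s)) = P k t"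
    by (simp add: P_def qpoly_eval_def annihilator_coeff_above)
  finally show ?thesis
    by (simp only: c_def)
qed

lemma qpoly_eval_annihilator_root:
  "i < k \<Longrightarrow> qpoly_eval (annihilator_coeff w k) k (w i :: 'a::{field,finite} hatS) = 0"
proof (induction k arbitrary: i)
  case (Suc k)
  have q: "CARD('a) = Suc (CARD('a) - 1)"
    using card_finite_field_ge_2[where 'a = 'a] by simp
  show ?case
  proof (cases "i < k")
    case True
    then show ?thesis
      using Suc.IH q by (subst qpoly_eval_annihilator_Suc) (simp add: power_0_left)
  next
    case False
    then have "i = k"
      using Suc.prems by simp
    have "x ^ CARD('a) = x ^ (CARD('a) - 1) * x" for x :: "'a hatS"
      using q power_Suc2 by metis
    then show ?thesis
      unfolding qpoly_eval_annihilator_Suc \<open>i = k\<close> by simp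
  qed
qed simp

lemma power_card_power_eq_qpoly_eval:
  fixes w :: "nat \<Rightarrow> 'a::{field,finite} hatS"
  assumes "i < n"
  shows "w i ^ (CARD('a) ^ n) = - (\<Sum>s<n. annihilator_coeff w n s * w i ^ (CARD('a) ^ s))"
  using qpoly_eval_annihilator_root[OF assms, of w]
  by (simp add: qpoly_eval_def lessThan_Suc_atMost[symmetric] eq_neg_iff_add_eq_0 add.commute)

text \<open>Cramer's rule: replacing the column of exponent \<open>n\<close> by the \<open>annihilator\<close> relation
  leaves only the coefficient of the missing exponent \<open>n - r\<close>.\<close>

lemma A_det_elementary:
  fixes w :: "nat \<Rightarrow> 'a::{field,finite} hatS"
  assumes r: "r \<le> n"
  shows "A_det n w (\<lambda>j. (if j < r then 1 else 0) + delta n j)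
     = (- 1) ^ r * annihilator_coeff w n (n - r) * A_det n w (delta n)"
proof (cases "r = 0")
  case False
  let ?q = "CARD('a)" and ?c = "annihilator_coeff w n"
  define M where "M = mat n n (\<lambda>(i, j). w i ^ (?q ^ delta n j))"
  define x where "x = vec n (\<lambda>j. - ?c (delta n j))"
  have M: "M \<in> carrier_mat n n" and x: "x \<in> carrier_vec n"
    by (simp_all add: M_def x_def)
  have Mx: "M *\<^sub>v x = vec n (\<lambda>i. w i ^ (?q ^ n))"
  proof (rule eq_vecI)
    fix i assume "i < dim_vec (vec n (\<lambda>i. w i ^ (?q ^ n)))"
    then have i: "i < n"
      by simp
    have "(M *\<^sub>v x) $ i = (\<Sum>j<n. w i ^ (?q ^ (n - Suc j)) * (- ?c (n - Suc j)))"
      using i by (simp add: M_def x_def mult_mat_vec_def scalar_prod_def delta_def atLeast0LessThan)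
    also have "\<dots> = (\<Sum>s<n. w i ^ (?q ^ s) * (- ?c s))"
      by (rule sum.nat_diff_reindex)
    also have "\<dots> = w i ^ (?q ^ n)"
      using power_card_power_eq_qpoly_eval[OF i, of w] by (simp add: sum_negf mult.commute)
    finally show "(M *\<^sub>v x) $ i = vec n (\<lambda>i. w i ^ (?q ^ n)) $ i"
      using i by simp
  qed (simp add: M_def)
  define R where "R = replace_col M (M *\<^sub>v x) (r - 1)"
  have R: "R \<in> carrier_mat n n"
    using M by (simp add: R_def replace_col_def)
  have "det R = x $ (r - 1) * det M"
    unfolding R_def by (rule cramer_lemma_mat[OF M x]) (use r False in simp)
  also have "x $ (r - 1) = - ?c (n - r)"
  proof -
    have "n - 1 - (r - 1) = n - r"
      using r False by simp
    then show ?thesis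
      using r False by (simp add: x_def delta_def)
  qed
  finally have det_R: "det R = - ?c (n - r) * det M" .
  have "swap_col_to_front R (r - 1) = mat n n (\<lambda>(i, j). if j = 0 then R $$ (i, r - 1)
      else if j \<le> r - 1 then R $$ (i, j - 1) else R $$ (i, j))"
    by (rule swap_col_to_front_result[OF R]) (use r False in simp)
  also have "\<dots> = mat n n (\<lambda>(i, j). w i ^ (?q ^ ((if j < r then 1 else 0) + delta n j)))"
  proof (rule eq_matI)
    fix i j assume "i < dim_row (mat n n (\<lambda>(i, j). w i ^ (?q ^ ((if j < r then 1 else 0) + delta n j))))"
      and "j < dim_col (mat n n (\<lambda>(i, j). w i ^ (?q ^ ((if j < r then 1 else 0) + delta n j))))"
    then have i: "i < n" and j: "j < n"
      by auto
    have R_entry: "R $$ (i, j') = (if j' = r - 1 then w i ^ (?q ^ n) else w i ^ (?q ^ delta n j'))"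
      if "j' < n" for j'
      using i that M Mx by (simp add: R_def replace_col_def M_def)
    show "mat n n (\<lambda>(i, j). if j = 0 then R $$ (i, r - 1) else if j \<le> r - 1 then R $$ (i, j - 1)
        else R $$ (i, j)) $$ (i, j) = mat n n (\<lambda>(i, j). w i ^ (?q ^ ((if j < r then 1 else 0) + delta n j))) $$ (i, j)"
      using i j r False by (auto simp: R_entry delta_def)
  qed auto
  finally have "A_det n w (\<lambda>j. (if j < r then 1 else 0) + delta n j) = (- 1) ^ (r - 1) * det R"
    using swap_col_to_front_det[OF R, of "r - 1"] r False by (simp add: A_det_def)
  also have "\<dots> = (- 1) ^ r * ?c (n - r) * A_det n w (delta n)"
    using False by (cases r) (simp_all add: det_R A_det_def M_def)
  finally show ?thesis .
qed simp

lemma E_W_eq_annihilator_coeff: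
  fixes w :: "nat \<Rightarrow> 'a::{field,finite} hatS"
  assumes "A_det n w (delta n) \<noteq> 0" and "r \<le> n"
  shows "E_W n w (int r) = (- 1) ^ r * annihilator_coeff w n (n - r)"
  using assms by (simp add: E_W_def schurW_eqI A_det_elementary)

text \<open>\<open>a\<close> and \<open>b\<close> enumerate increasingly two complementary subsets of \<open>{..<m + n}\<close>
  of sizes \<open>m\<close> and \<open>n\<close>.\<close>

definition is_shuffle :: "nat \<Rightarrow> nat \<Rightarrow> (nat \<Rightarrow> nat) \<Rightarrow> (nat \<Rightarrow> nat) \<Rightarrow> bool" where
  "is_shuffle m n a b \<longleftrightarrow> strict_mono_on {..<m} a \<and> strict_mono_on {..<n} b \<and>
     (\<forall>t<m. a t < m + n) \<and> (\<forall>k<n. b k < m + n) \<and> (\<forall>t<m. \<forall>k<n. a t \<noteq> b k)"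

definition shuffle_rows :: "nat \<Rightarrow> nat \<Rightarrow> (nat \<Rightarrow> nat) \<Rightarrow> (nat \<Rightarrow> nat) \<Rightarrow> 'b mat \<Rightarrow> 'b mat" where
  "shuffle_rows m n a b A = mat (m + n) (m + n) (\<lambda>(i, j). A $$ (if i < m then a i else b (i - m), j))"

lemma strict_mono_on_lessThan_add_le:
  fixes f :: "nat \<Rightarrow> nat"
  assumes f: "strict_mono_on {..<N} f" and "i \<le> j" "j < N"
  shows "f i + (j - i) \<le> f j"
  using assms(2,3)
proof (induction j)
  case (Suc j)
  show ?case
  proof (cases "i = Suc j")
    case False
    then have "f i + (j - i) \<le> f j" "f j < f (Suc j)"
      using Suc f by (auto simp: strict_mono_onD)
    then show ?thesis
      using Suc.prems False by linarith
  qed simp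
qed simp

lemma is_shuffle_cover:
  assumes ab: "is_shuffle m n a b" and p: "p < m + n"
  shows "(\<exists>t<m. a t = p) \<or> (\<exists>k<n. b k = p)"
proof -
  define \<sigma> where "\<sigma> i = (if i < m then a i else b (i - m))" for i
  have inj_a: "inj_on a {..<m}" and inj_b: "inj_on b {..<n}"
    using ab by (auto simp: is_shuffle_def intro: strict_mono_on_imp_inj_on)
  have "inj_on \<sigma> {..<m + n}"
  proof (rule inj_onI)
    fix i j assume ij: "i \<in> {..<m + n}" "j \<in> {..<m + n}" and eq: "\<sigma> i = \<sigma> j"
    consider "i < m" "j < m" | "i < m" "\<not> j < m" | "\<not> i < m" "j < m" | "\<not> i < m" "\<not> j < m"
      by blast
    then show "i = j"
    proof cases
      case 1
      then show ?thesis using eq inj_onD[OF inj_a] by (simp add: \<sigma>_def)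
    next
      case 2
      then show ?thesis using eq ij ab by (simp add: \<sigma>_def is_shuffle_def)
    next
      case 3
      then show ?thesis using eq[symmetric] ij ab by (simp add: \<sigma>_def is_shuffle_def)
    next
      case 4
      then have "i - m = j - m"
        using eq ij inj_onD[OF inj_b, of "i - m" "j - m"] by (simp add: \<sigma>_def)
      with 4 show ?thesis by simp
    qed
  qed
  moreover have "\<sigma> ` {..<m + n} \<subseteq> {..<m + n}"
    using ab by (auto simp: \<sigma>_def is_shuffle_def)
  ultimately have "\<sigma> ` {..<m + n} = {..<m + n}"
    by (simp add: endo_inj_surj)
  with p obtain i where i: "i < m + n" "\<sigma> i = p"
    by (metis imageE lessThan_iff)
  show ?thesis
  proof (cases "i < m")
    case True
    with i show ?thesis by (auto simp: \<sigma>_def)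
  next
    case False
    with i show ?thesis by (intro disjI2 exI[of _ "i - m"]) (simp add: \<sigma>_def)
  qed
qed

lemma shuffle_rows_trivial:
  assumes ab: "is_shuffle m n a b" and a: "\<And>t. t < m \<Longrightarrow> a t = t"
    and A: "A \<in> carrier_mat (m + n) (m + n)"
  shows "shuffle_rows m n a b A = A"
proof -
  have b: "b k = m + k" if k: "k < n" for k
  proof -
    have "m \<le> b k'" if k': "k' < n" for k'
    proof (rule ccontr)
      assume "\<not> m \<le> b k'"
      then have "b k' < m" "a (b k') = b k'"
        using a by auto
      with ab k' show False
        unfolding is_shuffle_def by blast
    qed
    moreover have "b 0 + k \<le> b k" "b k + (n - 1 - k) \<le> b (n - 1)"
      using ab k strict_mono_on_lessThan_add_le[of n b 0 k] strict_mono_on_lessThan_add_le[of n b k "n - 1"]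
      by (simp_all add: is_shuffle_def)
    moreover have "b (n - 1) < m + n"
      using ab k by (simp add: is_shuffle_def)
    ultimately show ?thesis
      using k by fastforce
  qed
  show ?thesis
  proof (rule eq_matI)
    fix i j assume "i < dim_row A" "j < dim_col A"
    then show "shuffle_rows m n a b A $$ (i, j) = A $$ (i, j)"
      using A by (cases "i < m") (simp_all add: shuffle_rows_def a b)
  qed (use A in \<open>simp_all add: shuffle_rows_def\<close>)
qed

lemma swaprows_shuffle_rows:
  assumes "t < m" "k < n" "A \<in> carrier_mat (m + n) (m + n)"
  shows "swaprows t (m + k) (shuffle_rows m n (a(t := b k)) (b(k := a t)) A) = shuffle_rows m n a b A"
proof (rule eq_matI)
  fix i j assume ij: "i < dim_row (shuffle_rows m n a b A)" "j < dim_col (shuffle_rows m n a b A)"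
  then show "swaprows t (m + k) (shuffle_rows m n (a(t := b k)) (b(k := a t)) A) $$ (i, j)
      = shuffle_rows m n a b A $$ (i, j)"
  proof (cases "i < m")
    case False
    then have "i - m = k \<longleftrightarrow> i = m + k"
      by arith
    then show ?thesis
      using assms ij False by (auto simp: shuffle_rows_def)
  qed (use assms ij in \<open>simp add: shuffle_rows_def\<close>)
qed (simp_all add: shuffle_rows_def)

lemma is_shuffle_ge:
  assumes "is_shuffle m n a b" "t < m"
  shows "t \<le> a t"
  using assms strict_mono_on_lessThan_add_le[of m a 0 t] by (simp add: is_shuffle_def)

lemma is_shuffle_step:
  assumes ab: "is_shuffle m n a b" and t: "t < m" "t < a t" and below: "\<And>s. s < t \<Longrightarrow> a s = s"
  obtains k where "k < n" "b k = a t - 1" "is_shuffle m n (a(t := a t - 1)) (b(k := a t))"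
proof -
  let ?p = "a t - 1"
  have a_mono: "a i < a j" if "i < j" "j < m" for i j
    using ab that unfolding is_shuffle_def by (intro strict_mono_onD[of "{..<m}" a]) auto
  have b_mono: "b i < b j" if "i < j" "j < n" for i j
    using ab that unfolding is_shuffle_def by (intro strict_mono_onD[of "{..<n}" b]) auto
  have a_inj: "a i = a j \<longleftrightarrow> i = j" if "i < m" "j < m" for i j
    using a_mono that by (metis less_irrefl nat_neq_iff)
  have b_inj: "b i = b j \<longleftrightarrow> i = j" if "i < n" "j < n" for i j
    using b_mono that by (metis less_irrefl nat_neq_iff)
  have p_not_a: "a s \<noteq> ?p" if "s < m" for s
    using below t a_mono[of t s] that by (cases s t rule: linorder_cases) auto
  have "?p < m + n"
    using ab t by (auto simp: is_shuffle_def)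
  then obtain k where k: "k < n" "b k = ?p"
    using is_shuffle_cover[OF ab] p_not_a by blast
  have b_ne_a: "b j \<noteq> a t" if "j < n" for j
    using ab t that unfolding is_shuffle_def by metis
  have "is_shuffle m n (a(t := ?p)) (b(k := a t))"
    unfolding is_shuffle_def
  proof (intro conjI allI impI strict_mono_onI)
    fix i j assume "i \<in> {..<m}" "j \<in> {..<m}" "i < j"
    then show "(a(t := ?p)) i < (a(t := ?p)) j"
      using a_mono[of i j] a_mono[of t j] below[of i] t by auto
  next
    fix i j assume "i \<in> {..<n}" "j \<in> {..<n}" "i < j"
    then show "(b(k := a t)) i < (b(k := a t)) j"
      using b_mono[of i j] b_mono[of k j] b_mono[of i k] b_ne_a[of j] k by (auto simp: less_Suc_eq)
  qed (use ab t k b_ne_a p_not_a a_inj b_inj in \<open>auto simp: is_shuffle_def\<close>)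
  with k show ?thesis
    by (rule that)
qed

lemma det_shuffle_rows:
  fixes A :: "'b::comm_ring_1 mat"
  assumes A: "A \<in> carrier_mat (m + n) (m + n)" and ab: "is_shuffle m n a b"
  shows "det (shuffle_rows m n a b A) = (- 1) ^ (\<Sum>t<m. a t - t) * det A"
  using ab
proof (induction "\<Sum>t<m. a t - t" arbitrary: a b rule: less_induct)
  case less
  show ?case
  proof (cases "\<exists>t<m. t < a t")
    case False
    then have "a t = t" if "t < m" for t
      using False is_shuffle_ge[OF less.prems that] that by (metis le_neq_implies_less)
    then show ?thesis
      using shuffle_rows_trivial[OF less.prems _ A] by simp
  next
    case True
    define t where "t = (LEAST t. t < m \<and> t < a t)"
    have t: "t < m" "t < a t"
      using LeastI_ex[OF True[simplified Bex_def]] by (simp_all add: t_def)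
    have below: "a s = s" if "s < t" for s
      using not_less_Least[of s "\<lambda>t. t < m \<and> t < a t"] is_shuffle_ge[OF less.prems, of s] that t
      by (simp add: t_def)
    obtain k where k: "k < n" "b k = a t - 1" and ab': "is_shuffle m n (a(t := a t - 1)) (b(k := a t))"
      using is_shuffle_step[OF less.prems t below] by blast
    let ?a' = "a(t := a t - 1)" and ?b' = "b(k := a t)"
    have sum: "(\<Sum>s<m. a s - s) = Suc (\<Sum>s<m. ?a' s - s)"
    proof -
      have "(\<Sum>s<m. a s - s) = (a t - t) + (\<Sum>s\<in>{..<m} - {t}. a s - s)"
        and "(\<Sum>s<m. ?a' s - s) = (?a' t - t) + (\<Sum>s\<in>{..<m} - {t}. ?a' s - s)"
        using t by (simp_all add: sum.remove)
      moreover have "(\<Sum>s\<in>{..<m} - {t}. ?a' s - s) = (\<Sum>s\<in>{..<m} - {t}. a s - s)"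
        by (intro sum.cong) auto
      ultimately show ?thesis
        using t by simp
    qed
    have "shuffle_rows m n a b A = swaprows t (m + k) (shuffle_rows m n ?a' ?b' A)"
      using swaprows_shuffle_rows[OF t(1) k(1) A, of a b] k(2) by simp
    then have "det (shuffle_rows m n a b A) = - det (shuffle_rows m n ?a' ?b' A)"
      using t k by (simp add: det_swaprows[where n = "m + n"] shuffle_rows_def)
    also have "\<dots> = (- 1) ^ (\<Sum>s<m. a s - s) * det A"
      using less.hyps[OF _ ab'] sum by simp
    finally show ?thesis .
  qed
qed

lemma det_unit_columns_append:
  fixes C :: "'b::idom mat"
  assumes C: "C \<in> carrier_mat (m + n) n" and ab: "is_shuffle m n a b"
  shows "det (mat (m + n) (m + n) (\<lambda>(p, c). if c < m then of_bool (p = a c) else C $$ (p, c - m)))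
    = (- 1) ^ (\<Sum>t<m. a t - t) * det (mat n n (\<lambda>(k, j). C $$ (b k, j)))"
    (is "det ?W = ?s * det ?Cb")
proof -
  have a: "a t < m + n" "a t = a t' \<longleftrightarrow> t = t'" if "t < m" "t' < m" for t t'
    using ab that strict_mono_on_imp_inj_on[of "{..<m}" a]
    by (auto simp: is_shuffle_def inj_on_def)
  have b: "b k \<noteq> a t" if "k < n" "t < m" for k t
    using ab that unfolding is_shuffle_def by metis
  have b': "b (i - m) < m + n" if "i < m + n" "\<not> i < m" for i
    using ab that by (simp add: is_shuffle_def)
  have "det (shuffle_rows m n a b ?W)
      = det (four_block_mat (1\<^sub>m m) (mat m n (\<lambda>(t, j). C $$ (a t, j))) (0\<^sub>m n m) ?Cb)"
    by (rule arg_cong[of _ _ det], rule eq_matI) (auto simp: shuffle_rows_def a b b')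
  also have "\<dots> = det (1\<^sub>m m :: 'b mat) * det ?Cb"
    by (rule det_four_block_mat_lower_left_zero) auto
  finally have shuffled: "det (shuffle_rows m n a b ?W) = det ?Cb"
    by simp
  have "?s * det ?Cb = ?s * det (shuffle_rows m n a b ?W)"
    by (simp only: shuffled)
  also have "\<dots> = (?s * ?s) * det ?W"
    by (simp add: det_shuffle_rows[OF _ ab] mult.assoc)
  also have "?s * ?s = 1"
    by (simp flip: power_mult_distrib)
  finally show ?thesis
    by simp
qed

text \<open>For \<open>B C = 0\<close>, multiply \<open>[B; 0 | 1]\<close> with \<open>[e\<^sub>a\<^sub>0, \<dots>, e\<^sub>a\<^sub>(\<^sub>m\<^sub>-\<^sub>1\<^sub>) | C]\<close>: the product is block
  lower triangular with diagonal blocks the \<open>a\<close>-columns of \<open>B\<close> and the last \<open>n\<close> rows of \<open>C\<close>.\<close>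

lemma det_complementary_minors:
  fixes B C :: "'b::idom mat"
  assumes B: "B \<in> carrier_mat m (m + n)" and C: "C \<in> carrier_mat (m + n) n"
    and BC: "B * C = 0\<^sub>m m n" and ab: "is_shuffle m n a b"
  shows "det (mat m m (\<lambda>(i, j). B $$ (i, a j))) * det (mat n n (\<lambda>(k, j). C $$ (m + k, j)))
    = (- 1) ^ (\<Sum>t<m. a t - t) * det (mat m m (\<lambda>(i, j). B $$ (i, j)))
      * det (mat n n (\<lambda>(k, j). C $$ (b k, j)))"
proof -
  define G where "G = mat (m + n) (m + n) (\<lambda>(i, p). if i < m then B $$ (i, p) else of_bool (p = i))"
  define W where "W = mat (m + n) (m + n) (\<lambda>(p, c). if c < m then of_bool (p = a c) else C $$ (p, c - m))"
  have a: "a t < m + n" if "t < m" for t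
    using ab that by (simp add: is_shuffle_def)
  have BC_entry: "(\<Sum>p<m + n. B $$ (i, p) * C $$ (p, j)) = 0" if "i < m" "j < n" for i j
  proof -
    have "(B * C) $$ (i, j) = 0"
      using BC that by simp
    then show ?thesis
      using B C that by (simp add: scalar_prod_def row_def col_def atLeast0LessThan)
  qed
  have GW: "G * W = four_block_mat (mat m m (\<lambda>(i, j). B $$ (i, a j))) (0\<^sub>m m n)
      (mat n m (\<lambda>(k, j). of_bool (m + k = a j))) (mat n n (\<lambda>(k, j). C $$ (m + k, j)))"
  proof (rule eq_matI)
    fix i j assume "i < dim_row (four_block_mat (mat m m (\<lambda>(i, j). B $$ (i, a j))) (0\<^sub>m m n)
      (mat n m (\<lambda>(k, j). of_bool (m + k = a j))) (mat n n (\<lambda>(k, j). C $$ (m + k, j))))"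
      and "j < dim_col (four_block_mat (mat m m (\<lambda>(i, j). B $$ (i, a j))) (0\<^sub>m m n)
      (mat n m (\<lambda>(k, j). of_bool (m + k = a j))) (mat n n (\<lambda>(k, j). C $$ (m + k, j))))"
    then have i: "i < m + n" and j: "j < m + n"
      by auto
    have "(G * W) $$ (i, j) = (\<Sum>p<m + n. G $$ (i, p) * W $$ (p, j))"
      using i j by (simp add: G_def W_def scalar_prod_def atLeast0LessThan)
    also have "\<dots> = (if i < m then (if j < m then B $$ (i, a j) else 0) else W $$ (i, j))"
    proof (cases "i < m")
      case True
      then have "(\<Sum>p<m + n. G $$ (i, p) * W $$ (p, j)) = (\<Sum>p<m + n. B $$ (i, p) * W $$ (p, j))"
        by (intro sum.cong) (simp_all add: G_def)
      also have "\<dots> = (if j < m then B $$ (i, a j) else 0)"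
      proof (cases "j < m")
        case True
        then have "(\<Sum>p<m + n. B $$ (i, p) * W $$ (p, j)) = (\<Sum>p<m + n. B $$ (i, p) * of_bool (p = a j))"
          using j by (intro sum.cong) (simp_all add: W_def)
        with True a show ?thesis
          by simp
      next
        case False
        then have "(\<Sum>p<m + n. B $$ (i, p) * W $$ (p, j)) = (\<Sum>p<m + n. B $$ (i, p) * C $$ (p, j - m))"
          using j by (intro sum.cong) (simp_all add: W_def)
        with False \<open>i < m\<close> j BC_entry show ?thesis
          by simp
      qed
      finally show ?thesis
        using True by simp
    next
      case False
      then have "(\<Sum>p<m + n. G $$ (i, p) * W $$ (p, j)) = (\<Sum>p<m + n. of_bool (p = i) * W $$ (p, j))"
        using i by (intro sum.cong) (simp_all add: G_def)
      with False i show ?thesis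
        by simp
    qed
    finally show "(G * W) $$ (i, j) = four_block_mat (mat m m (\<lambda>(i, j). B $$ (i, a j))) (0\<^sub>m m n)
      (mat n m (\<lambda>(k, j). of_bool (m + k = a j))) (mat n n (\<lambda>(k, j). C $$ (m + k, j))) $$ (i, j)"
      using i j by (auto simp: W_def)
  qed (auto simp: G_def W_def)
  have "det G * det W = det (G * W)"
    by (rule det_mult[symmetric, of _ "m + n"]) (simp_all add: G_def W_def)
  also have "\<dots> = det (mat m m (\<lambda>(i, j). B $$ (i, a j))) * det (mat n n (\<lambda>(k, j). C $$ (m + k, j)))"
    unfolding GW by (rule det_four_block_mat_upper_right_zero) auto
  moreover have "G = four_block_mat (mat m m (\<lambda>(i, j). B $$ (i, j))) (mat m n (\<lambda>(i, j). B $$ (i, m + j)))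
      (0\<^sub>m n m) (1\<^sub>m n)"
    using B by (intro eq_matI) (auto simp: G_def)
  then have "det G = det (mat m m (\<lambda>(i, j). B $$ (i, j))) * det (1\<^sub>m n :: 'b mat)"
    by (simp only:) (rule det_four_block_mat_lower_left_zero, auto)
  moreover have "det W = (- 1) ^ (\<Sum>t<m. a t - t) * det (mat n n (\<lambda>(k, j). C $$ (b k, j)))"
    unfolding W_def by (rule det_unit_columns_append[OF C ab])
  ultimately show ?thesis
    by (simp add: ac_simps)
qed

lemma finite_down_closed_eq_lessThan_card:
  fixes S :: "nat set"
  assumes "finite S" and down: "\<And>x y. x \<in> S \<Longrightarrow> y \<le> x \<Longrightarrow> y \<in> S"
  shows "S = {..<card S}"
proof (cases "S = {}")
  case False
  then have "S = {..Max S}"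
    using Max_in[OF assms(1) False] down by (auto intro: Max_ge[OF assms(1)])
  then show ?thesis
    by (metis card_atMost lessThan_Suc_atMost)
qed simp

lemma is_partition_antimono: "is_partition mu \<Longrightarrow> i \<le> j \<Longrightarrow> mu j \<le> mu i"
  unfolding is_partition_def by (metis lift_Suc_antimono_le)

lemma less_conj_part_iff:
  assumes mu: "is_partition mu" and j: "1 \<le> j"
  shows "i < conj_part mu j \<longleftrightarrow> j \<le> mu i"
proof -
  have "finite {i. j \<le> mu i}"
    using mu j by (auto simp: is_partition_def elim!: rev_finite_subset)
  then have "{i. j \<le> mu i} = {..<conj_part mu j}"
    unfolding conj_part_def
  proof (rule finite_down_closed_eq_lessThan_card)
    fix x y assume "x \<in> {i. j \<le> mu i}" "y \<le> x"
    then show "y \<in> {i. j \<le> mu i}"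
      using is_partition_antimono[OF mu \<open>y \<le> x\<close>] by simp
  qed
  then show ?thesis
    by blast
qed

context
  fixes m n :: nat and mu :: "nat \<Rightarrow> nat"
  assumes mu: "is_partition mu" and box: "subpart mu (\<lambda>i. if i < m then n else 0)"
begin

lemma box_le: "mu i \<le> n"
  using box by (auto simp: subpart_def split: if_splits dest: spec[of _ i])

lemma box_zero: "m \<le> i \<Longrightarrow> mu i = 0"
  using box by (auto simp: subpart_def dest: spec[of _ i])

lemma box_conj_part_le:
  assumes j: "1 \<le> j"
  shows "conj_part mu j \<le> m"
proof (rule ccontr)
  assume "\<not> conj_part mu j \<le> m"
  then have "j \<le> mu m"
    using less_conj_part_iff[OF mu j, of m] by simp
  with j show False
    using box_zero[of m] by simp
qed

lemma box_conj_part_antimono: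
  assumes j: "1 \<le> j" and jj': "j \<le> j'"
  shows "conj_part mu j' \<le> conj_part mu j"
proof (rule ccontr)
  assume "\<not> conj_part mu j' \<le> conj_part mu j"
  then have "j' \<le> mu (conj_part mu j)"
    using less_conj_part_iff[OF mu, of j' "conj_part mu j"] j jj' by simp
  then have "j \<le> mu (conj_part mu j)"
    using jj' by simp
  then show False
    using less_conj_part_iff[OF mu j, of "conj_part mu j"] by simp
qed

text \<open>The positions of the vertical and of the horizontal steps along the boundary of the Young
  diagram of \<open>mu\<close> inside the \<open>m \<times> n\<close> box.\<close>

lemma is_shuffle_box: "is_shuffle m n (\<lambda>t. t + (n - mu t)) (\<lambda>k. k + conj_part mu (n - k))"
  unfolding is_shuffle_def
proof (intro conjI allI impI strict_mono_onI)
  fix i j :: nat assume "i < j"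
  then show "i + (n - mu i) < j + (n - mu j)"
    using is_partition_antimono[OF mu, of i j] box_le[of i] by linarith
next
  fix i j :: nat assume "i \<in> {..<n}" "j \<in> {..<n}" "i < j"
  moreover have "conj_part mu (n - i) \<le> conj_part mu (n - j)"
    by (rule box_conj_part_antimono) (use \<open>i < j\<close> \<open>j \<in> {..<n}\<close> in auto)
  ultimately show "i + conj_part mu (n - i) < j + conj_part mu (n - j)"
    by simp
next
  fix k assume "k < n"
  moreover have "conj_part mu (n - k) \<le> m"
    by (rule box_conj_part_le) (use \<open>k < n\<close> in simp)
  ultimately show "k + conj_part mu (n - k) < m + n"
    by simp
next
  fix t k assume t: "t < m" and k: "k < n"
  have iff: "t < conj_part mu (n - k) \<longleftrightarrow> n - k \<le> mu t"
    using k by (intro less_conj_part_iff[OF mu]) simp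
  show "t + (n - mu t) \<noteq> k + conj_part mu (n - k)"
  proof (cases "n - k \<le> mu t")
    case True
    then have "n - mu t \<le> k" and "t < conj_part mu (n - k)"
      using iff by auto
    then show ?thesis
      by linarith
  next
    case False
    then have "k < n - mu t" and "conj_part mu (n - k) \<le> t"
      using iff by auto
    then show ?thesis
      by linarith
  qed
qed simp

lemma box_support: "{i. mu i \<noteq> 0} \<subseteq> {..<m}"
proof
  fix i assume "i \<in> {i. mu i \<noteq> 0}"
  then show "i \<in> {..<m}"
    using box_zero[of i] by (cases "m \<le> i") auto
qed

lemma psize_box: "psize mu = (\<Sum>t<m. mu t)"
  unfolding psize_def by (rule sum.mono_neutral_left[OF finite_lessThan box_support]) auto

lemma sum_box_complement: "(\<Sum>t<m. n - mu t) = n * m - psize mu"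
proof -
  have "(\<Sum>t<m. n - mu t) = (\<Sum>t<m. n) - (\<Sum>t<m. mu t)"
    using box_le by (rule sum_subtractf_nat)
  also have "(\<Sum>t<m. n) = n * m"
    by (simp add: mult.commute)
  finally show ?thesis
    by (simp only: psize_box)
qed

lemma psize_box_le: "psize mu \<le> n * m"
proof -
  have "(\<Sum>t<m. mu t) \<le> (\<Sum>t<m. n)"
    using box_le by (intro sum_mono)
  also have "\<dots> = n * m"
    by (simp add: mult.commute)
  finally show ?thesis
    by (simp only: psize_box)
qed

end

text \<open>Row \<open>i\<close> of \<open>E_matrix\<close> holds the coefficients of \<open>\<phi>\<^bsup>n-1-i\<^esup>(P\<^sub>n)\<close> (up to signs),
  shifted to start in column \<open>i\<close>; row \<open>p\<close> of \<open>frob_matrix\<close> holds the \<open>\<phi>\<^bsup>2n-1-p\<^esup>(w\<^sub>k)\<close>.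
  Their product vanishes because \<open>P\<^sub>n(w\<^sub>k) = 0\<close>.\<close>

definition E_matrix :: "nat \<Rightarrow> nat \<Rightarrow> (nat \<Rightarrow> 'a::{field,finite} hatS) \<Rightarrow> 'a hatS mat" where
  "E_matrix m n w = mat m (m + n) (\<lambda>(i, p).
     (- 1) ^ nat \<bar>int p - int i\<bar> * frob_int (int n - int (i + 1)) (E_W n w (int p - int i)))"

definition frob_matrix :: "nat \<Rightarrow> nat \<Rightarrow> (nat \<Rightarrow> 'a::{field,finite} hatS) \<Rightarrow> 'a hatS mat" where
  "frob_matrix m n w = mat (m + n) n (\<lambda>(p, k). frob_int (2 * int n - 1 - int p) (w k))"

lemma E_matrix_mult_frob_matrix:
  fixes w :: "nat \<Rightarrow> 'a::{field,finite} hatS"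
  assumes w: "A_det n w (delta n) \<noteq> 0"
  shows "E_matrix m n w * frob_matrix m n w = 0\<^sub>m m n"
proof (rule eq_matI)
  fix i k assume "i < dim_row (0\<^sub>m m n :: 'a hatS mat)" "k < dim_col (0\<^sub>m m n :: 'a hatS mat)"
  then have i: "i < m" and k: "k < n"
    by auto
  let ?\<phi> = "frob_int (int n - int (i + 1)) :: 'a hatS \<Rightarrow> _" and ?c = "annihilator_coeff w n"
  define f where "f p = E_matrix m n w $$ (i, p) * frob_matrix m n w $$ (p, k)" for p
  define h where "h s = i + n - s" for s
  have "(E_matrix m n w * frob_matrix m n w) $$ (i, k) = (\<Sum>p<m + n. f p)"
    using i k by (simp add: E_matrix_def frob_matrix_def f_def scalar_prod_def atLeast0LessThan)
  also have "\<dots> = (\<Sum>p\<in>h ` {..n}. f p)"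
  proof (rule sum.mono_neutral_right)
    show "h ` {..n} \<subseteq> {..<m + n}"
      using i by (auto simp: h_def)
    show "\<forall>p\<in>{..<m + n} - h ` {..n}. f p = 0"
    proof
      fix p assume p: "p \<in> {..<m + n} - h ` {..n}"
      have "\<not> (i \<le> p \<and> p \<le> i + n)"
      proof
        assume "i \<le> p \<and> p \<le> i + n"
        then have "p = h (i + n - p)" "i + n - p \<in> {..n}"
          by (auto simp: h_def)
        with p show False
          by blast
      qed
      then have "E_W n w (int p - int i) = 0"
        by (auto simp: E_W_def)
      with p i show "f p = 0"
        by (simp add: f_def E_matrix_def)
    qed
  qed simp
  also have "\<dots> = (\<Sum>s\<le>n. f (h s))"
    by (rule sum.reindex_cong[of h]) (auto simp: inj_on_def h_def)
  also have "\<dots> = (\<Sum>s\<le>n. ?\<phi> (?c s * w k ^ (CARD('a) ^ s)))"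
  proof (rule sum.cong[OF refl])
    fix s assume "s \<in> {..n}"
    then have s: "s \<le> n"
      by simp
    have hs: "h s < m + n" "int (h s) - int i = int (n - s)"
        "2 * int n - 1 - int (h s) = int n - int (i + 1) + int s"
      using i s by (simp_all add: h_def)
    have "E_matrix m n w $$ (i, h s) = (- 1) ^ nat \<bar>int (n - s)\<bar> * ?\<phi> (E_W n w (int (n - s)))"
      using i hs by (simp only: E_matrix_def index_mat case_prod_conv)
    also have "\<dots> = (- 1) ^ (n - s) * ?\<phi> ((- 1) ^ (n - s) * ?c s)"
      using s by (simp only: abs_of_nat nat_int E_W_eq_annihilator_coeff[OF w diff_le_self] diff_diff_cancel)
    moreover have "frob_matrix m n w $$ (h s, k) = ?\<phi> (frob_int (int s) (w k))"
      using k hs by (simp only: frob_matrix_def index_mat case_prod_conv frob_int_frob_int)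
    ultimately have "f (h s) = (- 1) ^ (n - s) * ?\<phi> ((- 1) ^ (n - s) * ?c s) * ?\<phi> (frob_int (int s) (w k))"
      by (simp add: f_def)
    also have "\<dots> = ((- 1) ^ (n - s) * (- 1) ^ (n - s)) * ?\<phi> (?c s * w k ^ (CARD('a) ^ s))"
      by (simp add: frob_int.hom_mult frob_int.hom_power frob_int.hom_uminus frob_int_of_nat ac_simps)
    finally show "f (h s) = ?\<phi> (?c s * w k ^ (CARD('a) ^ s))"
      by (simp flip: power_mult_distrib)
  qed
  also have "\<dots> = ?\<phi> (qpoly_eval ?c n (w k))"
    by (simp add: qpoly_eval_def frob_int.hom_sum)
  also have "\<dots> = 0"
    by (simp add: qpoly_eval_annihilator_root[OF k])
  finally show "(E_matrix m n w * frob_matrix m n w) $$ (i, k) = 0\<^sub>m m n $$ (i, k)"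
    using i k by simp
qed (simp_all add: E_matrix_def frob_matrix_def)

lemma det_E_matrix_left_block:
  fixes w :: "nat \<Rightarrow> 'a::{field,finite} hatS"
  assumes w: "A_det n w (delta n) \<noteq> 0"
  shows "det (mat m m (\<lambda>(i, j). E_matrix m n w $$ (i, j))) = 1"
proof -
  let ?L = "mat m m (\<lambda>(i, j). E_matrix m n w $$ (i, j))"
  have "upper_triangular ?L"
    by (auto simp: upper_triangular_def E_matrix_def E_W_def)
  then have "det ?L = prod_list (diag_mat ?L)"
    by (rule det_upper_triangular[of _ m]) simp
  also have "diag_mat ?L = map (\<lambda>i. 1) [0..<m]"
    using E_W_eq_annihilator_coeff[OF w, of 0] by (simp add: diag_mat_def E_matrix_def)
  also have "prod_list \<dots> = 1"
    by (simp add: map_replicate_const)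
  finally show ?thesis .
qed

lemma T_W_box_eq_det_E_matrix:
  fixes w :: "nat \<Rightarrow> 'a::{field,finite} hatS"
  assumes mu: "is_partition mu" and box: "subpart mu (\<lambda>i. if i < m then n else 0)" and "n \<noteq> 0"
  shows "T_W n w (\<lambda>i. if i < m then n else 0) mu = det (mat m m (\<lambda>(i, j). E_matrix m n w $$ (i, j + (n - mu j))))"
proof -
  have "plen (\<lambda>i. if i < m then n else 0) = m"
    using \<open>n \<noteq> 0\<close> by (simp add: plen_def)
  moreover have "plen mu \<le> m"
    unfolding plen_def using card_mono[OF finite_lessThan box_support[OF mu box]] by simp
  ultimately have N: "max (plen (\<lambda>i. if i < m then n else 0)) (plen mu) = m"
    by simp
  define R where "R i j = int n - int (mu j) - int (i + 1) + int (j + 1)" for i j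
  have R: "R i j = int (j + (n - mu j)) - int i" for i j
    using box_le[OF mu box, of j] by (simp add: R_def)
  have "T_W n w (\<lambda>i. if i < m then n else 0) mu
      = det (mat m m (\<lambda>(i, j). (- 1) ^ nat \<bar>R i j\<bar> * frob_int (int n - int (i + 1)) (E_W n w (R i j))))"
    unfolding T_W_def Let_def N R_def by (intro arg_cong[of _ _ det] eq_matI) auto
  also have "\<dots> = det (mat m m (\<lambda>(i, j). E_matrix m n w $$ (i, j + (n - mu j))))"
    using box_le[OF mu box] by (intro arg_cong[of _ _ det] eq_matI) (auto simp: E_matrix_def R)
  finally show ?thesis .
qed

lemma det_reverse_transpose:
  fixes f :: "nat \<Rightarrow> nat \<Rightarrow> 'b::comm_ring_1"
  shows "det (mat n n (\<lambda>(k, j). f (n - 1 - k) j))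
    = signof (\<lambda>i. if i < n then n - 1 - i else i) * det (mat n n (\<lambda>(i, j). f j i))"
proof -
  let ?r = "\<lambda>i. if i < n then n - 1 - i else i" and ?A = "mat n n (\<lambda>(i, j). f j i)"
  have r: "?r permutes {0..<n}"
    by (rule bij_imp_permutes, rule bij_betw_byWitness[of _ ?r]) auto
  have "mat n n (\<lambda>(k, j). f (n - 1 - k) j) = mat n n (\<lambda>(k, j). transpose_mat ?A $$ (?r k, j))"
    by (rule eq_matI) auto
  also have "det \<dots> = signof ?r * det (transpose_mat ?A)"
    by (rule det_permute_rows[OF _ r]) simp
  finally show ?thesis
    by (simp add: det_transpose[of _ n])
qed

lemma det_frob_matrix_rows:
  fixes w :: "nat \<Rightarrow> 'a::{field,finite} hatS"
  assumes "\<And>k. k < n \<Longrightarrow> c k < m + n"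
  shows "det (mat n n (\<lambda>(k, j). frob_matrix m n w $$ (c k, j)))
    = signof (\<lambda>i. if i < n then n - 1 - i else i)
      * det (mat n n (\<lambda>(i, j). frob_int (2 * int n - 1 - int (c (n - 1 - j))) (w i)))"
proof -
  have "mat n n (\<lambda>(k, j). frob_matrix m n w $$ (c k, j))
      = mat n n (\<lambda>(k, j). frob_int (2 * int n - 1 - int (c (n - 1 - (n - 1 - k)))) (w j))"
    using assms by (intro eq_matI) (auto simp: frob_matrix_def)
  then show ?thesis
    using det_reverse_transpose[where f = "\<lambda>i j. frob_int (2 * int n - 1 - int (c (n - 1 - i))) (w j)"]
    by simp
qed

theorem T_W_rectangle:
  fixes w :: "nat \<Rightarrow> 'a::{field,finite} hatS"
  assumes w: "A_det n w (delta n) \<noteq> 0" and mu: "is_partition mu"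
    and box: "subpart mu (\<lambda>i. if i < m then n else 0)"
  shows "T_W n w (\<lambda>i. if i < m then n else 0) mu
           * det (mat n n (\<lambda>(i, j). frob_int (int n + int (j + 1) - int m - 1) (w i)))
         = (- 1) ^ (n * m + psize mu)
           * det (mat n n (\<lambda>(i, j). frob_int (int n + int (j + 1) - int (conj_part mu (j + 1)) - 1) (w i)))"
    (is "?T * det ?D2 = ?sign * det ?D1")
proof (cases "n = 0")
  case True
  then have "mu = (\<lambda>_. 0)"
    using box_le[OF mu box] by auto
  with True show ?thesis
    by (simp add: T_W_def plen_def psize_def)
next
  case False
  let ?a = "\<lambda>t. t + (n - mu t)" and ?b = "\<lambda>k. k + conj_part mu (n - k)"
  let ?E = "E_matrix m n w" and ?F = "frob_matrix m n w"
  let ?s = "signof (\<lambda>i. if i < n then n - 1 - i else i) :: 'a hatS"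
  have ab: "is_shuffle m n ?a ?b"
    by (rule is_shuffle_box[OF mu box])
  have minors: "det (mat m m (\<lambda>(i, j). ?E $$ (i, ?a j))) * det (mat n n (\<lambda>(k, j). ?F $$ (m + k, j)))
      = (- 1) ^ (\<Sum>t<m. ?a t - t) * det (mat m m (\<lambda>(i, j). ?E $$ (i, j)))
        * det (mat n n (\<lambda>(k, j). ?F $$ (?b k, j)))"
    by (rule det_complementary_minors[OF _ _ E_matrix_mult_frob_matrix[OF w] ab])
       (simp_all add: E_matrix_def frob_matrix_def)
  have sign: "(- 1) ^ (\<Sum>t<m. ?a t - t) = (?sign :: 'a hatS)"
  proof -
    have "n * m + psize mu = (n * m - psize mu) + 2 * psize mu"
      using psize_box_le[OF mu box] by simp
    then have "(?sign :: 'a hatS) = (- 1) ^ (n * m - psize mu) * ((- 1) ^ 2) ^ psize mu"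
      by (simp only: power_add power_mult)
    also have "\<dots> = (- 1) ^ (\<Sum>t<m. ?a t - t)"
      using sum_box_complement[OF mu box] by simp
    finally show ?thesis
      by (rule sym)
  qed
  have last_rows: "det (mat n n (\<lambda>(k, j). ?F $$ (m + k, j))) = ?s * det ?D2"
  proof -
    have "mat n n (\<lambda>(i, j). frob_int (2 * int n - 1 - int (m + (n - 1 - j))) (w i)) = ?D2"
      by (intro eq_matI) (auto simp: of_nat_diff)
    then show ?thesis
      using det_frob_matrix_rows[of n "\<lambda>k. m + k" m w] by simp
  qed
  have shuffled_rows: "det (mat n n (\<lambda>(k, j). ?F $$ (?b k, j))) = ?s * det ?D1"
  proof -
    have "n - (n - 1 - j) = j + 1" if "j < n" for j
      using that by simp
    then have "mat n n (\<lambda>(i, j). frob_int (2 * int n - 1 - int (?b (n - 1 - j))) (w i)) = ?D1"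
      by (intro eq_matI) (auto simp: of_nat_diff)
    then show ?thesis
      using det_frob_matrix_rows[of n ?b m w] ab by (simp add: is_shuffle_def)
  qed
  have "?T * det (mat n n (\<lambda>(k, j). ?F $$ (m + k, j)))
      = (- 1) ^ (\<Sum>t<m. ?a t - t) * 1 * det (mat n n (\<lambda>(k, j). ?F $$ (?b k, j)))"
    using minors by (simp only: T_W_box_eq_det_E_matrix[OF mu box False] det_E_matrix_left_block[OF w])
  then have "?s * (?T * det ?D2) = ?s * (?sign * det ?D1)"
    unfolding last_rows shuffled_rows sign by (simp only: mult_1_left mult_1_right ac_simps)
  moreover have "?s \<noteq> 0"
    by (simp add: sign_def split: if_splits)
  ultimately show ?thesis
    by simp
qed

theorem mainTheorem3:
  fixes n m :: nat and mu :: "nat \<Rightarrow> nat"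
  assumes "m \<ge> 1"
    and "is_partition mu"
    and "subpart mu (\<lambda>i. if i < m then n else 0)"
  shows "T_W n (X :: nat \<Rightarrow> 'a::{field,finite} hatS) (\<lambda>i. if i < m then n else 0) mu
           * det (mat n n (\<lambda>(i, j). frob_int (int n + int (j + 1) - int m - 1) (X i)))
         = (-1) ^ (n * m + psize mu)
           * det (mat n n (\<lambda>(i, j).
               frob_int (int n + int (j + 1) - int (conj_part mu (j + 1)) - 1) (X i)))"
  using T_W_rectangle[OF A_det_delta_X_ne_0 assms(2,3)] .

end
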